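(* For every nonnegative integer $n$, $$\sum_{k=0}^{\infty}(-1)^k(4k+1)\,\frac{(-4n)_k\,(-n+\tfrac38)_k\,(\tfrac12)_k}{k!\,(n+\tfrac98)_k\,(4n+\tfrac32)_k}=\left(\frac{2^8}{5^5}\right)^n\frac{(\tfrac78)_n(\tfrac38)_n(\tfrac98)_n^2}{(\tfrac{33}{40})_n(\tfrac{41}{40})_n(\tfrac{9}{40})_n(\tfrac{17}{40})_n}.$$ (The sum is finite, since $(-4n)_k=0$ for $k>4n$.)
   Context: $(a)_j=\Gamma(a+j)/\Gamma(a)=a(a+1)\cdots(a+j-1)$ denotes the rising factorial (Pochhammer symbol), with $(a)_0=1$. *)

theory Defs
  imports "HOL-Analysis.Analysis"
begin

end

theory Submission
  imports Defs
begin

(* Proof by creative telescoping in n (a Wilf-Zeilberger pair).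

   Let F n k be the k-th summand and S n = (SUM k. F n k); the sum is finite because
   (-4n)_k = 0 for k > 4n.  The right-hand side R n satisfies R (n+1) = r n * R n for an
   explicit rational function r, and R 0 = 1 = S 0.  So it suffices to show
   S (n+1) = r n * S n.  For this we write both F (n+1) k and F n k as rational multiples
   of one "shifted" hypergeometric term B n k (the summand with n replaced by n+1 and
   the factor 4k+1 removed), and exhibit an antidifference
      G n k = B n k * k (k+n+9/8) (k+4n+9/2) * P(n,k) / (5 * D(n)),
   where P is an explicit polynomial certificate, such that
      G n (k+1) - G n k = F (n+1) k - r n * F n k.
   This reduces to a single polynomial identity, checked by the algebra method.
   Summing over k < 4n+5, where G n 0 = 0 = G n (4n+5), yields the recurrence. *)

lemma pochhammer_lower_base:
  fixes a :: "'a :: comm_ring_1"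
  shows "pochhammer (a - 1) k * (a - 1 + of_nat k) = pochhammer a k * (a - 1)"
  using pochhammer_rec[of "a - 1" k] pochhammer_rec'[of "a - 1" k] by (simp add: mult.commute)

lemma pochhammer_lower_base4:
  fixes a :: "'a :: idom"
  shows "pochhammer (a - 4) k * ((a - 4 + of_nat k) * (a - 3 + of_nat k) * (a - 2 + of_nat k) * (a - 1 + of_nat k))
       = pochhammer a k * ((a - 4) * (a - 3) * (a - 2) * (a - 1))"
proof -
  have "pochhammer (a - 4) k * (a - 4 + of_nat k) = pochhammer (a - 3) k * (a - 4)"
    using pochhammer_lower_base[of "a - 3" k] by (simp add: algebra_simps)
  moreover have "pochhammer (a - 3) k * (a - 3 + of_nat k) = pochhammer (a - 2) k * (a - 3)"
    using pochhammer_lower_base[of "a - 2" k] by (simp add: algebra_simps)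
  moreover have "pochhammer (a - 2) k * (a - 2 + of_nat k) = pochhammer (a - 1) k * (a - 2)"
    using pochhammer_lower_base[of "a - 1" k] by (simp add: algebra_simps)
  moreover have "pochhammer (a - 1) k * (a - 1 + of_nat k) = pochhammer a k * (a - 1)"
    by (rule pochhammer_lower_base)
  ultimately show ?thesis by algebra
qed

definition summand :: "nat \<Rightarrow> nat \<Rightarrow> real" where
  "summand n k = (-1::real)^k * (4 * real k + 1) *
     (pochhammer (- 4 * real n) k * pochhammer (- real n + 3/8) k * pochhammer (1/2) k)
     / (fact k * pochhammer (real n + 9/8) k * pochhammer (4 * real n + 3/2) k)"

definition shifted_term :: "real \<Rightarrow> nat \<Rightarrow> real" where
  "shifted_term x k = (-1::real)^k *
     (pochhammer (- 4 * x - 4) k * pochhammer (- x - 5/8) k * pochhammer (1/2) k)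
     / (fact k * pochhammer (x + 17/8) k * pochhammer (4 * x + 11/2) k)"

lemma summand_Suc: "summand (Suc n) k = shifted_term (real n) k * (4 * real k + 1)"
proof -
  have shift: "- 4 * real (Suc n) = - 4 * real n - 4" "- real (Suc n) + 3/8 = - real n - 5/8"
    "real (Suc n) + 9/8 = real n + 17/8" "4 * real (Suc n) + 3/2 = 4 * real n + 11/2"
    by simp_all
  show ?thesis unfolding summand_def shifted_term_def shift by simp
qed

lemma cancel_three_factors:
  fixes s pA pB pC fk pD pE A1 A2 A3 w u v :: real
  assumes "fk > 0" "pD > 0" "pE > 0" "w > 0" "u > 0" "v > 0"
  shows "(- s) * ((A1 * pA) * (A2 * pB) * (A3 * pC)) / ((w * fk) * (u * pD) * (v * pE)) * (w * u * v)
       = - (s * (pA * pB * pC) / (fk * pD * pE)) * (A1 * A2 * A3)"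
  using assms by (simp add: field_simps)

text \<open>The hypergeometric recurrence of the shifted term in k (for x \<ge> 0 all lower
  parameters are positive, so no denominator vanishes).\<close>

lemma shifted_term_Suc:
  assumes "x \<ge> 0"
  shows "shifted_term x (Suc k) * (real (Suc k) * (x + 17/8 + real k) * (4*x + 11/2 + real k))
       = - shifted_term x k * ((- 4 * x - 4 + real k) * (- x - 5/8 + real k) * (1/2 + real k))"
proof -
  have pos: "pochhammer (x + 17/8) k > 0" "pochhammer (4*x + 11/2) k > 0"
    using assms by (auto intro!: pochhammer_pos)
  have lin: "x + 17/8 + real k > 0" "4*x + 11/2 + real k > 0" "real (Suc k) > 0"
    using assms by auto
  have "shifted_term x (Suc k) = (- ((-1)^k)) *
      (((- 4 * x - 4 + real k) * pochhammer (- 4 * x - 4) k) * ((- x - 5/8 + real k) * pochhammer (- x - 5/8) k)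
       * ((1/2 + real k) * pochhammer (1/2) k))
      / ((real (Suc k) * fact k) * ((x + 17/8 + real k) * pochhammer (x + 17/8) k)
         * ((4 * x + 11/2 + real k) * pochhammer (4 * x + 11/2) k))"
    unfolding shifted_term_def pochhammer_rec' fact_Suc by simp
  then show ?thesis unfolding shifted_term_def
    using cancel_three_factors[OF fact_gt_zero pos lin(3) lin(1) lin(2)] by simp
qed

lemma substitute_four_ratios:
  fixes s t N1 N2 N3 M1 M2 fk D1 D2 E1 E2 a1 a2 a3 a4 c1 c2 c3 c4 :: real
  assumes "fk > 0" "D1 > 0" "D2 > 0" "E1 > 0" "E2 > 0"
    and h1: "M1*a1 = N1*c1" and h2: "M2*a2 = N2*c2" and h3: "D1*a3 = E1*c3" and h4: "D2*a4 = E2*c4"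
  shows "s*t*(N1*N2*N3)/(fk*D1*D2) * (c1*c2*c3*c4) = s*(M1*M2*N3)/(fk*E1*E2) * (t*a1*a2*a3*a4)"
proof -
  have "s*t*(N1*N2*N3)/(fk*D1*D2) * (c1*c2*c3*c4) = s*t*N3/fk*(N1*c1)*(N2*c2)*(c3/D1)*(c4/D2)"
    using assms(1-5) by (simp add: field_simps)
  also have "c3/D1 = a3/E1" using h3 assms by (simp add: field_simps)
  also have "c4/D2 = a4/E2" using h4 assms by (simp add: field_simps)
  also have "s*t*N3/fk*(N1*c1)*(N2*c2)*(a3/E1)*(a4/E2) = s*t*N3/fk*(M1*a1)*(M2*a2)*(a3/E1)*(a4/E2)"
    by (simp only: h1[symmetric] h2[symmetric])
  also have "\<dots> = s*(M1*M2*N3)/(fk*E1*E2) * (t*a1*a2*a3*a4)"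
    using assms(1-5) by (simp add: field_simps)
  finally show ?thesis .
qed

definition shift_num :: "real \<Rightarrow> real \<Rightarrow> real" where
  "shift_num x K = (4*K+1) * (K-4*x-1)*(K-4*x-2)*(K-4*x-3)*(K-4*x-4)*(K-x-5/8)*(K+x+9/8)
     *(K+4*x+3/2)*(K+4*x+5/2)*(K+4*x+7/2)*(K+4*x+9/2)"

definition shift_den :: "real \<Rightarrow> real" where
  "shift_den x = (-4*x-1)*(-4*x-2)*(-4*x-3)*(-4*x-4)*(-x-5/8)*(x+9/8)
     *(4*x+3/2)*(4*x+5/2)*(4*x+7/2)*(4*x+9/2)"

lemma shift_den_nonzero: "x \<ge> 0 \<Longrightarrow> shift_den x \<noteq> 0"
  unfolding shift_den_def by (auto simp: add_eq_0_iff)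

lemma summand_via_shifted_term:
  "summand n k * shift_den (real n) = shifted_term (real n) k * shift_num (real n) (real k)"
proof -
  define x where "x = real n"
  have x0: "x \<ge> 0" unfolding x_def by simp
  have h1: "pochhammer (- 4 * x - 4) k * ((- 4 * x - 4 + real k) * (- 4 * x - 3 + real k)
        * (- 4 * x - 2 + real k) * (- 4 * x - 1 + real k))
      = pochhammer (- 4 * x) k * ((- 4 * x - 4) * (- 4 * x - 3) * (- 4 * x - 2) * (- 4 * x - 1))"
    using pochhammer_lower_base4[of "- 4 * x" k] by simp
  have h2: "pochhammer (- x - 5/8) k * (- x - 5/8 + real k) = pochhammer (- x + 3/8) k * (- x - 5/8)"
  proof -
    have lowered: "- x + 3/8 - 1 = - x - 5/8" by simp
    show ?thesis using pochhammer_lower_base[of "- x + 3/8" k] unfolding lowered .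
  qed
  have h3: "pochhammer (x + 9/8) k * (x + 9/8 + real k) = pochhammer (x + 17/8) k * (x + 9/8)"
  proof -
    have lowered: "x + 17/8 - 1 = x + 9/8" by simp
    show ?thesis using pochhammer_lower_base[of "x + 17/8" k] unfolding lowered .
  qed
  have h4: "pochhammer (4 * x + 3/2) k * ((4 * x + 3/2 + real k) * (4 * x + 5/2 + real k)
        * (4 * x + 7/2 + real k) * (4 * x + 9/2 + real k))
      = pochhammer (4 * x + 11/2) k * ((4 * x + 3/2) * (4 * x + 5/2) * (4 * x + 7/2) * (4 * x + 9/2))"
  proof -
    have lowered: "4 * x + 11/2 - 4 = 4 * x + 3/2" "4 * x + 11/2 - 3 = 4 * x + 5/2"
      "4 * x + 11/2 - 2 = 4 * x + 7/2" "4 * x + 11/2 - 1 = 4 * x + 9/2" by simp_all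
    show ?thesis using pochhammer_lower_base4[of "4 * x + 11/2" k] unfolding lowered .
  qed
  have pos: "fact k > (0::real)" "pochhammer (x + 9/8) k > 0" "pochhammer (4 * x + 3/2) k > 0"
     "pochhammer (x + 17/8) k > 0" "pochhammer (4 * x + 11/2) k > 0"
    using x0 by (auto intro!: pochhammer_pos)
  have "summand n k * ((- 4 * x - 4) * (- 4 * x - 3) * (- 4 * x - 2) * (- 4 * x - 1) * (- x - 5/8) * (x + 9/8)
      * ((4 * x + 3/2) * (4 * x + 5/2) * (4 * x + 7/2) * (4 * x + 9/2)))
    = shifted_term x k * ((4 * real k + 1) * ((- 4 * x - 4 + real k) * (- 4 * x - 3 + real k)
      * (- 4 * x - 2 + real k) * (- 4 * x - 1 + real k)) * (- x - 5/8 + real k) * (x + 9/8 + real k)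
      * ((4 * x + 3/2 + real k) * (4 * x + 5/2 + real k) * (4 * x + 7/2 + real k) * (4 * x + 9/2 + real k)))"
    unfolding summand_def shifted_term_def x_def[symmetric]
    by (rule substitute_four_ratios[OF pos h1 h2 h3 h4])
  moreover have "shift_den x = (- 4 * x - 4) * (- 4 * x - 3) * (- 4 * x - 2) * (- 4 * x - 1) * (- x - 5/8)
      * (x + 9/8) * ((4 * x + 3/2) * (4 * x + 5/2) * (4 * x + 7/2) * (4 * x + 9/2))"
    unfolding shift_den_def by algebra
  moreover have "shift_num x (real k) = (4 * real k + 1) * ((- 4 * x - 4 + real k) * (- 4 * x - 3 + real k)
      * (- 4 * x - 2 + real k) * (- 4 * x - 1 + real k)) * (- x - 5/8 + real k) * (x + 9/8 + real k)
      * ((4 * x + 3/2 + real k) * (4 * x + 5/2 + real k) * (4 * x + 7/2 + real k) * (4 * x + 9/2 + real k))"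
    unfolding shift_num_def by algebra
  ultimately show ?thesis unfolding x_def by simp
qed

definition cert_poly :: "real \<Rightarrow> real \<Rightarrow> real" where
  "cert_poly x K =
     ((-697549073760) + (-16540609738176) * x + (-173927194085376) * x^2 + (-1074219529085952) * x^3 + (-4347430249701376) * x^4 + (-12164937454977024) * x^5 + (-24169981369384960) * x^6 + (-34406845812572160) * x^7 + (-34876949671182336) * x^8 + (-24583152630497280) * x^9 + (-11451001286426624) * x^10 + (-3168603532689408) * x^11 + (-394312357511168) * x^12)
   + ((-249882724224) + (-4349326046976) * x + (-33513752945664) * x^2 + (-150242664972288) * x^3 + (-433440394051584) * x^4 + (-840391081328640) * x^5 + (-1108949256372224) * x^6 + (-983589118279680) * x^7 + (-561397322743808) * x^8 + (-186277026594816) * x^9 + (-27298812133376) * x^10) * K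
   + ((455069809152) + (8150377185792) * x + (64104239179776) * x^2 + (291653917540352) * x^3 + (850392196317184) * x^4 + (1661344914866176) * x^5 + (2203796155400192) * x^6 + (1961429154398208) * x^7 + (1121787475656704) * x^8 + (372554053189632) * x^9 + (54597624266752) * x^10) * K^2
   + ((175917256704) + (2168590233600) * x + (11607480827904) * x^2 + (35168335953920) * x^3 + (65794216034304) * x^4 + (77663695798272) * x^5 + (56390907330560) * x^6 + (22996328644608) * x^7 + (4028679323648) * x^8) * K^3
   + ((-161646492672) + (-2046354665472) * x + (-11180142133248) * x^2 + (-34382237401088) * x^3 + (-64993594703872) * x^4 + (-77237218967552) * x^5 + (-56298297098240) * x^6 + (-22996328644608) * x^7 + (-4028679323648) * x^8) * K^4
   + ((-33937698816) + (-291621371904) * x + (-1022301044736) * x^2 + (-1884005859328) * x^3 + (-1920739573760) * x^4 + (-1023544393728) * x^5 + (-222264557568) * x^6) * K^5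
   + ((21584683008) + (188600942592) * x + (670494621696) * x^2 + (1247235014656) * x^3 + (1277987651584) * x^4 + (682362929152) * x^5 + (148176371712) * x^6) * K^6
   + ((1783627776) + (9965666304) * x + (18924699648) * x^2 + (15032385536) * x^3 + (4294967296) * x^4) * K^7
   + ((-891813888) + (-4982833152) * x + (-9462349824) * x^2 + (-7516192768) * x^3 + (-2147483648) * x^4) * K^8"

definition cert_den :: "real \<Rightarrow> real" where
  "cert_den x = (4*x+1)*(4*x+2)*(4*x+3)*(4*x+4)*(8*x+5)*(8*x+9)*(8*x+3)*(8*x+5)*(8*x+7)*(8*x+9)
     *(40*x+33)*(40*x+41)*(40*x+9)*(40*x+17)"

lemma cert_den_pos: "x \<ge> 0 \<Longrightarrow> cert_den x > 0"
  unfolding cert_den_def by simp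

text \<open>The polynomial identity behind the telescoping; 1073741824 = 2^30.\<close>

lemma certificate_identity:
  fixes x K :: real
  shows "- ((K - 4*x - 4) * (K - x - 5/8) * (K + 1/2)) * cert_poly x (K+1)
           - K * (K + x + 9/8) * (K + 4*x + 9/2) * cert_poly x K
         = 5 * cert_den x * (4*K+1) + 1073741824 * ((x+7/8)*(x+3/8)*(x+9/8)^2) * shift_num x K"
  unfolding cert_poly_def cert_den_def shift_num_def by algebra

text \<open>The ratio r x = R (x+1) / R x of consecutive right-hand sides, and how it combines
  with the shift factor of the summand.\<close>

definition rhs_ratio :: "real \<Rightarrow> real" where
  "rhs_ratio x = (2^8/5^5) * ((x+7/8)*(x+3/8)*(x+9/8)^2) / ((x+33/40)*(x+41/40)*(x+9/40)*(x+17/40))"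

lemma rhs_ratio_over_shift_den:
  assumes "x \<ge> 0"
  shows "rhs_ratio x / shift_den x = - 1073741824 * ((x+7/8)*(x+3/8)*(x+9/8)^2) / (5 * cert_den x)"
  using assms shift_den_nonzero[OF assms] cert_den_pos[OF assms]
  unfolding rhs_ratio_def shift_den_def cert_den_def by (simp add: field_simps)

definition antidifference :: "real \<Rightarrow> nat \<Rightarrow> real" where
  "antidifference x k = shifted_term x k * (real k * (real k + x + 9/8) * (real k + 4*x + 9/2))
     * cert_poly x (real k) / (5 * cert_den x)"

lemma antidifference_Suc:
  assumes "x \<ge> 0"
  shows "antidifference x (Suc k) = - shifted_term x k
     * ((real k - 4 * x - 4) * (real k - x - 5/8) * (real k + 1/2)) * cert_poly x (real k + 1) / (5 * cert_den x)"
proof -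
  have "antidifference x (Suc k) = shifted_term x (Suc k)
      * (real (Suc k) * (x + 17/8 + real k) * (4*x + 11/2 + real k)) * cert_poly x (real (Suc k)) / (5 * cert_den x)"
    unfolding antidifference_def by (simp add: algebra_simps)
  also have "\<dots> = - shifted_term x k * ((- 4 * x - 4 + real k) * (- x - 5/8 + real k) * (1/2 + real k))
      * cert_poly x (real (Suc k)) / (5 * cert_den x)"
    unfolding shifted_term_Suc[OF assms] ..
  finally show ?thesis by (simp add: algebra_simps)
qed

lemma telescoping:
  "antidifference (real n) (Suc k) - antidifference (real n) k
     = summand (Suc n) k - rhs_ratio (real n) * summand n k"
proof -
  define x where "x = real n"
  define K where "K = real k"
  define B where "B = shifted_term x k"
  have x0: "x \<ge> 0" unfolding x_def by simp
  have den: "cert_den x > 0" using cert_den_pos[OF x0] .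
  have next_term: "summand (Suc n) k = B * (4*K+1)"
    unfolding summand_Suc B_def x_def K_def ..
  have this_term: "summand n k = B * shift_num x K / shift_den x"
    using summand_via_shifted_term[of n k] shift_den_nonzero[OF x0]
    unfolding B_def x_def[symmetric] K_def[symmetric] by (simp add: field_simps)
  have "antidifference x (Suc k) - antidifference x k
      = B * (- ((K - 4*x - 4) * (K - x - 5/8) * (K + 1/2)) * cert_poly x (K+1)
             - K * (K + x + 9/8) * (K + 4*x + 9/2) * cert_poly x K) / (5 * cert_den x)"
  proof -
    have "antidifference x (Suc k)
        = - B * ((K - 4*x - 4) * (K - x - 5/8) * (K + 1/2)) * cert_poly x (K+1) / (5 * cert_den x)"
      unfolding antidifference_Suc[OF x0] B_def K_def ..
    moreover have "antidifference x k
        = B * (K * (K + x + 9/8) * (K + 4*x + 9/2)) * cert_poly x K / (5 * cert_den x)"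
      unfolding antidifference_def B_def K_def ..
    ultimately show ?thesis using den by (simp add: field_simps)
  qed
  also have "\<dots> = B * (5 * cert_den x * (4*K+1)
                 + 1073741824 * ((x+7/8)*(x+3/8)*(x+9/8)^2) * shift_num x K) / (5 * cert_den x)"
    unfolding certificate_identity ..
  also have "\<dots> = B * (4*K+1) - B * shift_num x K
                   * (- 1073741824 * ((x+7/8)*(x+3/8)*(x+9/8)^2) / (5 * cert_den x))"
    using den by (simp add: field_simps)
  also have "\<dots> = summand (Suc n) k - rhs_ratio x * summand n k"
    unfolding next_term this_term rhs_ratio_over_shift_den[OF x0, symmetric] by simp
  finally show ?thesis unfolding x_def .
qed

lemma summand_vanishes: "k > 4 * n \<Longrightarrow> summand n k = 0"
proof -
  assume "k > 4 * n"
  moreover have "- 4 * real n = - of_nat (4 * n)" by simp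
  ultimately have "pochhammer (- 4 * real n) k = 0"
    using pochhammer_of_nat_eq_0_iff[of "4*n" k] by simp
  then show ?thesis unfolding summand_def by simp
qed

lemma antidifference_vanishes: "antidifference (real n) (4 * n + 5) = 0"
proof -
  have "- 4 * real n - 4 = - of_nat (4 * n + 4)" by simp
  then have "pochhammer (- 4 * real n - 4) (4 * n + 5) = 0"
    using pochhammer_of_nat_eq_0_iff[of "4*n+4" "4*n+5"] by simp
  then show ?thesis unfolding antidifference_def shifted_term_def by simp
qed

lemma suminf_summand: "M \<ge> 4 * n + 1 \<Longrightarrow> suminf (summand n) = (\<Sum>k<M. summand n k)"
  by (rule suminf_finite) (auto intro: summand_vanishes)

lemma suminf_summand_Suc: "suminf (summand (Suc n)) = rhs_ratio (real n) * suminf (summand n)"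
proof -
  have "(\<Sum>k<4*n+5. summand (Suc n) k - rhs_ratio (real n) * summand n k)
      = antidifference (real n) (4*n+5) - antidifference (real n) 0"
    unfolding telescoping[symmetric] by (rule sum_lessThan_telescope)
  also have "\<dots> = 0"
    unfolding antidifference_vanishes by (simp add: antidifference_def)
  finally have "(\<Sum>k<4*n+5. summand (Suc n) k) = rhs_ratio (real n) * (\<Sum>k<4*n+5. summand n k)"
    by (simp add: sum_subtractf sum_distrib_left)
  moreover have "suminf (summand (Suc n)) = (\<Sum>k<4*n+5. summand (Suc n) k)"
    by (rule suminf_summand) simp
  moreover have "suminf (summand n) = (\<Sum>k<4*n+5. summand n k)"
    by (rule suminf_summand) simp
  ultimately show ?thesis by simp
qed

definition rhs :: "nat \<Rightarrow> real" where
  "rhs n = ((2^8) / (5^5)) ^ n *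
     (pochhammer (7/8) n * pochhammer (3/8) n * (pochhammer (9/8) n)^2)
     / (pochhammer (33/40) n * pochhammer (41/40) n * pochhammer (9/40) n * pochhammer (17/40) n)"

lemma rhs_Suc: "rhs (Suc n) = rhs_ratio (real n) * rhs n"
proof -
  have "pochhammer (33/40) n > (0::real)" "pochhammer (41/40) n > (0::real)"
     "pochhammer (9/40) n > (0::real)" "pochhammer (17/40) n > (0::real)"
    by (auto intro!: pochhammer_pos)
  then show ?thesis unfolding rhs_def rhs_ratio_def pochhammer_rec'
    by (simp add: field_simps) algebra
qed

theorem theorem8:
  fixes n :: nat
  shows "(\<Sum>k. (-1::real)^k * (4 * real k + 1) *
            (pochhammer (- 4 * real n) k * pochhammer (- real n + 3/8) k * pochhammer (1/2) k)
          / (fact k * pochhammer (real n + 9/8) k * pochhammer (4 * real n + 3/2) k))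
        = ((2^8) / (5^5)) ^ n *
          (pochhammer (7/8) n * pochhammer (3/8) n * (pochhammer (9/8) n)^2)
          / (pochhammer (33/40) n * pochhammer (41/40) n * pochhammer (9/40) n * pochhammer (17/40) n)"
proof -
  have "suminf (summand n) = rhs n"
  proof (induction n)
    case 0
    have "suminf (summand 0) = (\<Sum>k<1. summand 0 k)" by (rule suminf_summand) simp
    also have "\<dots> = 1" by (simp add: summand_def)
    finally show ?case by (simp add: rhs_def)
  next
    case (Suc n)
    then show ?case using suminf_summand_Suc rhs_Suc by simp
  qed
  then show ?thesis unfolding summand_def rhs_def by simp
qed

end
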